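(* Let $\kappa, m, n$ be positive integers and $s$ a nonnegative integer such that $\kappa^4 m^4 n^4 - 32\kappa(m^2+n^2) = s^2$. Let $\beta$ be a positive integer. If $\kappa^2 m^2 n^2 - s = 2\beta$, then $\kappa$ divides $\beta^2$ and \[ \beta^3 + 64 = (\beta\kappa m^2 - 8)(\beta\kappa n^2 - 8). \] If $\kappa^2 m^2 n^2 - s \geq 2\beta$, then $\beta^3 + 64 \geq (\beta\kappa m^2 - 8)(\beta\kappa n^2 - 8)$. *)

theory Defs
  imports Main
begin

end

theory Submission
  imports Defs
begin

text \<open>Write \<open>A = \<kappa>\<^sup>2 m\<^sup>2 n\<^sup>2\<close> and \<open>D = 8\<kappa>(m\<^sup>2 + n\<^sup>2)\<close>. The hypothesis says that
  the quadratic \<open>x\<^sup>2 - A x + D\<close> has discriminant \<open>s\<^sup>2\<close>, so its smaller root is \<open>(A - s)/2\<close>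
  and it is nonnegative to the left of that root. Expanding the product gives
  \<open>\<beta>\<^sup>3 + 64 - (\<beta>\<kappa>m\<^sup>2 - 8)(\<beta>\<kappa>n\<^sup>2 - 8) = \<beta> (\<beta>\<^sup>2 - A\<beta> + D)\<close>, which settles both claims;
  divisibility follows from \<open>\<beta>\<^sup>2 = A\<beta> - D\<close>, as \<open>\<kappa>\<close> divides \<open>A\<close> and \<open>D\<close>.\<close>

lemma quadratic_factor_by_discriminant:
  fixes A D s x :: "'a::comm_ring_1"
  assumes "A^2 - 4 * D = s^2"
  shows "4 * (x^2 - A * x + D) = (2 * x - A + s) * (2 * x - A - s)"
proof -
  have "4 * D = A^2 - s^2" using assms by (simp add: algebra_simps)
  then show ?thesis by (simp add: algebra_simps power2_eq_square)
qed

lemma quadratic_eq_0_at_smaller_root: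
  fixes A D s x :: "'a::linordered_idom"
  assumes "A^2 - 4 * D = s^2" and "2 * x = A - s"
  shows "x^2 - A * x + D = 0"
proof -
  have "4 * (x^2 - A * x + D) = 0"
    using quadratic_factor_by_discriminant[OF assms(1)] assms(2) by simp
  then show ?thesis by simp
qed

lemma quadratic_nonneg_left_of_roots:
  fixes A D s x :: "'a::linordered_idom"
  assumes "A^2 - 4 * D = s^2" and "s \<ge> 0" and "2 * x \<le> A - s"
  shows "x^2 - A * x + D \<ge> 0"
proof -
  have "0 \<le> (2 * x - A + s) * (2 * x - A - s)"
    using assms(2,3) by (intro mult_nonpos_nonpos) simp_all
  then have "0 \<le> 4 * (x^2 - A * x + D)"
    using quadratic_factor_by_discriminant[OF assms(1)] by simp
  then show ?thesis by simp
qed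

lemma shifted_product_eq:
  fixes \<beta> \<kappa> m n :: "'a::comm_ring_1"
  shows "(\<beta> * \<kappa> * m^2 - 8) * (\<beta> * \<kappa> * n^2 - 8)
    = \<beta>^3 + 64 - \<beta> * (\<beta>^2 - \<kappa>^2 * m^2 * n^2 * \<beta> + 8 * \<kappa> * (m^2 + n^2))"
  by (simp add: algebra_simps power2_eq_square power3_eq_cube)

theorem lemma2:
  fixes \<kappa> m n s \<beta> :: int
  assumes "\<kappa> > 0" and "m > 0" and "n > 0" and "s \<ge> 0"
    and "\<kappa>^4 * m^4 * n^4 - 32 * \<kappa> * (m^2 + n^2) = s^2"
    and "\<beta> > 0"
  shows "(\<kappa>^2 * m^2 * n^2 - s = 2 * \<beta> \<longrightarrow>
            \<kappa> dvd \<beta>^2 \<and>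
            \<beta>^3 + 64 = (\<beta> * \<kappa> * m^2 - 8) * (\<beta> * \<kappa> * n^2 - 8))
       \<and> (\<kappa>^2 * m^2 * n^2 - s \<ge> 2 * \<beta> \<longrightarrow>
            \<beta>^3 + 64 \<ge> (\<beta> * \<kappa> * m^2 - 8) * (\<beta> * \<kappa> * n^2 - 8))"
proof -
  define A where "A = \<kappa>^2 * m^2 * n^2"
  define D where "D = 8 * \<kappa> * (m^2 + n^2)"
  have disc: "A^2 - 4 * D = s^2"
    using assms(5) unfolding A_def D_def by (simp add: power_mult_distrib flip: power_mult)
  have product: "(\<beta> * \<kappa> * m^2 - 8) * (\<beta> * \<kappa> * n^2 - 8) = \<beta>^3 + 64 - \<beta> * (\<beta>^2 - A * \<beta> + D)"
    unfolding A_def D_def by (rule shifted_product_eq)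
  show ?thesis
  proof (intro conjI impI)
    assume "\<kappa>^2 * m^2 * n^2 - s = 2 * \<beta>"
    then have root: "\<beta>^2 - A * \<beta> + D = 0"
      using quadratic_eq_0_at_smaller_root[OF disc] unfolding A_def by simp
    then have "\<beta>^2 = \<kappa> * (\<kappa> * m^2 * n^2 * \<beta> - 8 * (m^2 + n^2))"
      unfolding A_def D_def by (simp add: algebra_simps power2_eq_square)
    then show "\<kappa> dvd \<beta>^2" by simp
    show "\<beta>^3 + 64 = (\<beta> * \<kappa> * m^2 - 8) * (\<beta> * \<kappa> * n^2 - 8)"
      using product root by simp
  next
    assume "\<kappa>^2 * m^2 * n^2 - s \<ge> 2 * \<beta>"
    then have "\<beta>^2 - A * \<beta> + D \<ge> 0"
      using quadratic_nonneg_left_of_roots[OF disc assms(4)] unfolding A_def by simp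
    then show "\<beta>^3 + 64 \<ge> (\<beta> * \<kappa> * m^2 - 8) * (\<beta> * \<kappa> * n^2 - 8)"
      using product assms(6) by simp
  qed
qed

end
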